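(* If $f(z)=z+\sum_{n\ge2}a_nz^n$ belongs to $\mathcal{H}_{\sigma}$, then $|a_2a_4-a_3^2|\le\frac{3}{2}$.
   Context: $\mathbb{U}=\{z\in\mathbb{C}:|z|<1\}$. $\sigma$ denotes the class of analytic functions $f(z)=z+\sum_{n\ge2}a_nz^n$ on $\mathbb{U}$ that are univalent in $\mathbb{U}$ and whose inverse $g=f^{-1}$ is also univalent in $\mathbb{U}$. $\mathcal{H}_{\sigma}$ is the set of $f\in\sigma$ with $\operatorname{Re} f'(z)>0$ for $z\in\mathbb{U}$ and $\operatorname{Re} g'(w)>0$ for $w\in\mathbb{U}$, where $g=f^{-1}$ (equivalently, $f'(z)\prec\frac{1+z}{1-z}$ and $g'(w)\prec\frac{1+w}{1-w}$). *)

theory Defs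
  imports "HOL-Analysis.Analysis"
begin

definition unit_disc :: "complex set" where
  "unit_disc = ball 0 1"

definition normalized :: "(complex \<Rightarrow> complex) \<Rightarrow> bool" where
  "normalized f \<longleftrightarrow> f holomorphic_on unit_disc \<and> f 0 = 0 \<and> deriv f 0 = 1"

definition coeff_at0 :: "(complex \<Rightarrow> complex) \<Rightarrow> nat \<Rightarrow> complex" where
  "coeff_at0 f n = (deriv ^^ n) f 0 / of_nat (fact n)"

text \<open>g is the (analytically continued) inverse of f on the unit disc: g is analytic on
  the disc and agrees with the local inverse of f near 0.\<close>
definition inverse_on_disc :: "(complex \<Rightarrow> complex) \<Rightarrow> (complex \<Rightarrow> complex) \<Rightarrow> bool" where
  "inverse_on_disc f g \<longleftrightarrow> g holomorphic_on unit_disc \<and>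
     (\<exists>e>0. \<forall>w\<in>ball 0 e. g w \<in> unit_disc \<and> f (g w) = w)"

definition bi_univalent :: "(complex \<Rightarrow> complex) \<Rightarrow> bool" where
  "bi_univalent f \<longleftrightarrow> normalized f \<and> inj_on f unit_disc \<and>
     (\<exists>g. inverse_on_disc f g \<and> inj_on g unit_disc)"

definition H_sigma :: "(complex \<Rightarrow> complex) \<Rightarrow> bool" where
  "H_sigma f \<longleftrightarrow> normalized f \<and> inj_on f unit_disc \<and>
     (\<forall>z\<in>unit_disc. Re (deriv f z) > 0) \<and>
     (\<exists>g. inverse_on_disc f g \<and> inj_on g unit_disc \<and>
          (\<forall>w\<in>unit_disc. Re (deriv g w) > 0))"

end

theory Submission
  imports Defs "HOL-Complex_Analysis.Complex_Analysis"
begin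

text \<open>Since \<open>Re f' > 0\<close> and \<open>f'(0) = 1\<close>, the derivative \<open>f'\<close> is a Caratheodory function, so its
  Taylor coefficients are bounded by 2 and hence \<open>|a\<^sub>n| \<le> 2/n\<close>. The triangle inequality then gives
  \<open>|a\<^sub>2a\<^sub>4 - a\<^sub>3\<^sup>2| \<le> 1 \<cdot> 1/2 + (2/3)\<^sup>2 \<le> 3/2\<close>.
  The Caratheodory estimate \<open>|p\<^sub>k| \<le> 2\<close> is obtained by averaging \<open>p\<close> over the rotations by
  \<open>k\<close>-th roots of unity, which kills \<open>p\<^sub>1, \<dots>, p\<^sub>k\<^sub>-\<^sub>1\<close> and keeps \<open>p\<^sub>k\<close>, and then applying the
  Cauchy estimate to the Cayley transform \<open>(q - 1)/(q + 1)\<close>, a self-map of the disc whose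
  lowest Taylor coefficient is \<open>p\<^sub>k/2\<close>.\<close>

lemma higher_deriv_sum:
  fixes f :: "'i \<Rightarrow> complex \<Rightarrow> complex"
  assumes "finite I" "\<And>i. i \<in> I \<Longrightarrow> f i holomorphic_on S" "open S" "z \<in> S"
  shows "(deriv ^^ n) (\<lambda>w. \<Sum>i\<in>I. f i w) z = (\<Sum>i\<in>I. (deriv ^^ n) (f i) z)"
  using assms(1,2)
proof (induction I rule: finite_induct)
  case (insert i I)
  have "(deriv ^^ n) (\<lambda>w. f i w + (\<Sum>i\<in>I. f i w)) z
          = (deriv ^^ n) (f i) z + (deriv ^^ n) (\<lambda>w. \<Sum>i\<in>I. f i w) z"
    by (rule higher_deriv_add[OF _ _ assms(3,4)]) (use insert in \<open>auto intro!: holomorphic_on_sum\<close>)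
  with insert show ?case by simp
qed simp

lemma Cauchy_higher_deriv_bound_ball:
  assumes holf: "f holomorphic_on ball z r" and bound: "\<And>w. w \<in> ball z r \<Longrightarrow> norm (f w) \<le> B"
    and "r > 0"
  shows "norm ((deriv ^^ k) f z) \<le> fact k * B / r ^ k"
proof -
  have "\<forall>\<^sub>F s in at_left r. norm ((deriv ^^ k) f z) \<le> fact k * B / s ^ k"
  proof -
    have "\<forall>\<^sub>F s in at_left r. s \<in> {0<..<r}"
      using \<open>r > 0\<close> by (intro eventually_at_left_real) simp
    then show ?thesis
    proof eventually_elim
      case (elim s)
      then have "cball z s \<subseteq> ball z r" by auto
      then show ?case
        using elim bound
        by (intro Cauchy_inequality holomorphic_on_subset[OF holf]
              continuous_on_subset[OF holomorphic_on_imp_continuous_on[OF holf]])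
           (auto simp: dist_norm norm_minus_commute)
    qed
  qed
  moreover have "((\<lambda>s. fact k * B / s ^ k) \<longlongrightarrow> fact k * B / r ^ k) (at_left r)"
    using \<open>r > 0\<close> by (intro tendsto_intros) auto
  ultimately show ?thesis
    using \<open>r > 0\<close> by (intro tendsto_lowerbound) (auto simp: trivial_limit_at_left_real)
qed

lemma sum_powers_root_unity:
  assumes "k \<ge> 1"
  shows "(\<Sum>j<k. (exp (2 * of_real pi * \<i> / of_nat k) ^ m) ^ j) = (if k dvd m then of_nat k else 0)"
proof -
  define \<zeta> where "\<zeta> = exp (2 * of_real pi * \<i> / of_nat k) ^ m"
  have \<zeta>_eq_1_iff: "\<zeta> ^ l = 1 \<longleftrightarrow> k dvd m * l" for l
    unfolding \<zeta>_def power_mult[symmetric] exp_of_nat_mult[symmetric]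
    using complex_root_unity_eq_1[OF assms, of "m * l"] by (simp add: mult_ac)
  have "(\<Sum>j<k. \<zeta> ^ j) = (if k dvd m then of_nat k else 0)"
  proof (cases "k dvd m")
    case True
    then show ?thesis using \<zeta>_eq_1_iff[of 1] by simp
  next
    case False
    then have "\<zeta> \<noteq> 1" "\<zeta> ^ k = 1" using \<zeta>_eq_1_iff[of 1] \<zeta>_eq_1_iff[of k] by simp_all
    then show ?thesis using False by (simp add: geometric_sum)
  qed
  then show ?thesis by (simp add: \<zeta>_def)
qed

definition rotation_average :: "nat \<Rightarrow> (complex \<Rightarrow> complex) \<Rightarrow> complex \<Rightarrow> complex" where
  "rotation_average k p z = (\<Sum>j<k. p (exp (2 * of_real pi * \<i> / of_nat k) ^ j * z)) / of_nat k"

lemma norm_root_unity_power_mult [simp]: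
  "norm (exp (2 * of_real pi * \<i> / of_nat k) ^ j * z) = norm z"
  by (simp add: norm_mult norm_power norm_exp_eq_Re)

lemma holomorphic_on_rotation_average:
  assumes "p holomorphic_on ball 0 r"
  shows "rotation_average k p holomorphic_on ball 0 r"
  unfolding rotation_average_def[abs_def]
  by (intro holomorphic_intros holomorphic_on_sum
        holomorphic_on_compose_gen[OF _ assms, unfolded o_def]) auto

lemma higher_deriv_rotation_average:
  assumes "p holomorphic_on ball 0 r" "r > 0" "k \<ge> 1"
  shows "(deriv ^^ m) (rotation_average k p) 0 = (if k dvd m then (deriv ^^ m) p 0 else 0)"
proof -
  define \<omega> :: complex where "\<omega> = exp (2 * of_real pi * \<i> / of_nat k)"
  have hol_rotated: "(\<lambda>z. p (\<omega> ^ j * z)) holomorphic_on ball 0 r" for j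
    unfolding \<omega>_def
    by (intro holomorphic_intros holomorphic_on_compose_gen[OF _ assms(1), unfolded o_def]) auto
  have "rotation_average k p = (\<lambda>z. inverse (of_nat k) * (\<Sum>j<k. p (\<omega> ^ j * z)))"
    by (simp add: fun_eq_iff rotation_average_def \<omega>_def divide_inverse mult.commute)
  then have "(deriv ^^ m) (rotation_average k p) 0
               = inverse (of_nat k) * (deriv ^^ m) (\<lambda>z. \<Sum>j<k. p (\<omega> ^ j * z)) 0"
    using assms(2) by (auto intro!: higher_deriv_cmult holomorphic_on_sum hol_rotated)
  also have "(deriv ^^ m) (\<lambda>z. \<Sum>j<k. p (\<omega> ^ j * z)) 0
               = (\<Sum>j<k. (deriv ^^ m) (\<lambda>z. p (\<omega> ^ j * z)) 0)"
    using assms(2) by (intro higher_deriv_sum[of _ _ "ball 0 r"] hol_rotated) auto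
  also have "\<dots> = (\<Sum>j<k. (\<omega> ^ j) ^ m * (deriv ^^ m) p 0)"
    using assms(1,2)
    by (intro sum.cong refl, subst higher_deriv_compose_linear[where S="ball 0 r" and T="ball 0 r"])
       (auto simp: \<omega>_def)
  also have "\<dots> = (\<Sum>j<k. (\<omega> ^ m) ^ j) * (deriv ^^ m) p 0"
    by (simp add: sum_distrib_left sum_distrib_right power_mult[symmetric] mult.commute)
  finally show ?thesis
    using assms(3) sum_powers_root_unity[OF assms(3), of m] by (simp add: \<omega>_def)
qed

lemma Re_rotation_average_pos:
  assumes "\<And>z. z \<in> ball 0 r \<Longrightarrow> Re (p z) > 0" "z \<in> ball 0 r" "k \<ge> 1"
  shows "Re (rotation_average k p z) > 0"
proof -
  have "(\<Sum>j<k. Re (p (exp (2 * of_real pi * \<i> / of_nat k) ^ j * z))) > 0"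
    using assms by (intro sum_pos) (auto simp: lessThan_empty_iff)
  then show ?thesis
    using assms(3) by (simp add: rotation_average_def Re_sum Re_divide_of_nat)
qed

lemma norm_Cayley_le_1:
  fixes w :: complex
  assumes "Re w \<ge> 0"
  shows "norm ((w - 1) / (w + 1)) \<le> 1"
proof -
  have "norm (w - 1) \<le> norm (w + 1)"
    using assms by (simp add: cmod_def power2_eq_square algebra_simps)
  then show ?thesis by (simp add: norm_divide divide_le_eq_1)
qed

lemma norm_lowest_higher_deriv_le_positive_real_part:
  assumes holq: "q holomorphic_on ball 0 1" and re: "\<And>z. z \<in> ball 0 1 \<Longrightarrow> Re (q z) > 0"
    and q0: "q 0 = 1" and vanish: "\<And>m. 1 \<le> m \<Longrightarrow> m < k \<Longrightarrow> (deriv ^^ m) q 0 = 0"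
    and "k \<ge> 1"
  shows "norm ((deriv ^^ k) q 0) \<le> 2 * fact k"
proof -
  have nonzero: "q z + 1 \<noteq> 0" if "z \<in> ball 0 1" for z
    using re[OF that] by (auto simp: complex_eq_iff)
  have hol_num: "(\<lambda>z. q z - 1) holomorphic_on ball 0 1"
    and hol_den: "(\<lambda>z. inverse (q z + 1)) holomorphic_on ball 0 1"
    using nonzero by (auto intro!: holomorphic_intros holq)
  define W where "W z = (q z - 1) * inverse (q z + 1)" for z
  have deriv_num: "(deriv ^^ i) (\<lambda>z. q z - 1) 0 = (if i = 0 then 0 else (deriv ^^ i) q 0)" for i
    using higher_deriv_diff[OF holq holomorphic_on_const, of 0 i 1] q0 by simp
  \<comment> \<open>Only the term in which all \<open>k\<close> derivatives fall on the numerator survives.\<close>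
  have "(deriv ^^ k) W 0 = (\<Sum>i = 0..k. of_nat (k choose i) * (deriv ^^ i) (\<lambda>z. q z - 1) 0 *
                (deriv ^^ (k - i)) (\<lambda>z. inverse (q z + 1)) 0)"
    unfolding W_def[abs_def] by (rule higher_deriv_mult[OF hol_num hol_den]) auto
  also have "\<dots> = (\<Sum>i\<in>{k}. of_nat (k choose i) * (deriv ^^ i) (\<lambda>z. q z - 1) 0 *
                (deriv ^^ (k - i)) (\<lambda>z. inverse (q z + 1)) 0)"
    by (rule sum.mono_neutral_right) (auto simp: deriv_num vanish)
  also have "\<dots> = (deriv ^^ k) q 0 / 2"
    using \<open>k \<ge> 1\<close> q0 by (simp add: deriv_num field_simps)
  finally have "(deriv ^^ k) q 0 = 2 * (deriv ^^ k) W 0"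
    by (simp add: field_simps)
  moreover have "norm ((deriv ^^ k) W 0) \<le> fact k * 1 / 1 ^ k"
  proof (rule Cauchy_higher_deriv_bound_ball)
    show "W holomorphic_on ball 0 1"
      unfolding W_def[abs_def] using hol_num hol_den by (rule holomorphic_on_mult)
    show "norm (W z) \<le> 1" if "z \<in> ball 0 1" for z
      using norm_Cayley_le_1[of "q z"] re[OF that] by (simp add: W_def divide_inverse)
  qed simp
  ultimately show ?thesis by (simp add: norm_mult)
qed

lemma Caratheodory_higher_deriv_bound:
  assumes holp: "p holomorphic_on ball 0 1" and re: "\<And>z. z \<in> ball 0 1 \<Longrightarrow> Re (p z) > 0"
    and p0: "p 0 = 1" and "k \<ge> 1"
  shows "norm ((deriv ^^ k) p 0) \<le> 2 * fact k"
proof -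
  let ?q = "rotation_average k p"
  have "(deriv ^^ k) ?q 0 = (deriv ^^ k) p 0"
    using higher_deriv_rotation_average[OF holp, of k k] \<open>k \<ge> 1\<close> by simp
  moreover have "norm ((deriv ^^ k) ?q 0) \<le> 2 * fact k"
  proof (rule norm_lowest_higher_deriv_le_positive_real_part)
    show "?q 0 = 1"
      using higher_deriv_rotation_average[OF holp, of k 0] p0 \<open>k \<ge> 1\<close> by simp
    show "(deriv ^^ m) ?q 0 = 0" if "1 \<le> m" "m < k" for m
      using higher_deriv_rotation_average[OF holp, of k m] that by (auto dest: dvd_imp_le)
  qed (use holp re \<open>k \<ge> 1\<close> in \<open>auto intro: holomorphic_on_rotation_average Re_rotation_average_pos[where r=1]\<close>)
  ultimately show ?thesis by simp
qed

lemma norm_coeff_at0_le_of_Re_deriv_pos: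
  assumes holf: "f holomorphic_on unit_disc" and "deriv f 0 = 1"
    and "\<And>z. z \<in> unit_disc \<Longrightarrow> Re (deriv f z) > 0" and "n \<ge> 1"
  shows "norm (coeff_at0 f (Suc n)) \<le> 2 / real (Suc n)"
proof -
  have "deriv f holomorphic_on ball 0 1"
    using holf by (intro holomorphic_deriv) (auto simp: unit_disc_def)
  then have bound: "norm ((deriv ^^ n) (deriv f) 0) \<le> 2 * fact n"
    using assms by (intro Caratheodory_higher_deriv_bound) (auto simp: unit_disc_def)
  have "coeff_at0 f (Suc n) = (deriv ^^ n) (deriv f) 0 / (of_nat (Suc n) * fact n)"
    by (simp add: coeff_at0_def funpow_Suc_right algebra_simps del: funpow.simps)
  then have "norm (coeff_at0 f (Suc n)) = norm ((deriv ^^ n) (deriv f) 0) / (real (Suc n) * fact n)"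
    by (simp add: norm_divide norm_mult del: of_nat_Suc)
  also have "\<dots> \<le> 2 * fact n / (real (Suc n) * fact n)"
    by (rule divide_right_mono[OF bound]) simp
  also have "\<dots> = 2 / real (Suc n)"
    by simp
  finally show ?thesis .
qed

theorem corollary4p6:
  fixes f :: "complex \<Rightarrow> complex"
  assumes "H_sigma f"
  shows "cmod (coeff_at0 f 2 * coeff_at0 f 4 - (coeff_at0 f 3)\<^sup>2) \<le> 3 / 2"
proof -
  have coeff_bound: "cmod (coeff_at0 f (Suc n)) \<le> 2 / real (Suc n)" if "n \<ge> 1" for n
    using assms that unfolding H_sigma_def normalized_def
    by (intro norm_coeff_at0_le_of_Re_deriv_pos) auto
  have a2: "cmod (coeff_at0 f 2) \<le> 1"
    using coeff_bound[of 1] by (simp add: numeral_2_eq_2)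
  have a3: "cmod (coeff_at0 f 3) \<le> 2 / 3"
    using coeff_bound[of 2] by (simp add: numeral_3_eq_3)
  have a4: "cmod (coeff_at0 f 4) \<le> 1 / 2"
    using coeff_bound[of 3] by (simp add: eval_nat_numeral)
  have "cmod (coeff_at0 f 2 * coeff_at0 f 4 - (coeff_at0 f 3)\<^sup>2)
          \<le> cmod (coeff_at0 f 2) * cmod (coeff_at0 f 4) + cmod (coeff_at0 f 3) ^ 2"
    by (metis norm_mult norm_power norm_triangle_ineq4)
  also have "\<dots> \<le> 1 * (1 / 2) + (2 / 3) ^ 2"
    by (intro add_mono mult_mono power_mono a2 a3 a4) auto
  also have "\<dots> \<le> 3 / 2"
    by (simp add: power2_eq_square)
  finally show ?thesis .
qed

end
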